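(* Consider $\dot y=A(t)y+B(t)(u+\Delta(y,t))$, $y\in\mathbb{R}^{\bar n}$, $u\in\mathbb{R}^{\bar m}$, with continuous, bounded, $T$-periodic $A(t),B(t)$ (minimal period $T>0$) and unknown bounded $\Delta$. Let $K:\mathbb{R}_+\to\mathbb{R}^{\bar m\times\bar n}$ be continuous and $T$-periodic such that the origin of $\dot\chi=A^{cl}(t)\chi$, $A^{cl}=A+BK$, is exponentially stable, and let $\Psi_{A^{cl}}(t,t_0)$ be its state-transition matrix and $\mathcal M_{A^{cl}}=\Psi_{A^{cl}}(T,0)$ its monodromy matrix. Let $X_0\in\mathbb{R}^{\bar n\times(\bar n-\bar m)}$ be of full rank and let the $\mathcal{C}^1$ matrix function $S:\mathbb{R}_+\to\mathbb{R}^{\bar m\times\bar n}$ satisfy $S(t)\Psi_{A^{cl}}(t,0)X_0p=0$ for all $p\in\mathbb{R}^{\bar n-\bar m}$ and all $t\ge0$. If $\operatorname{rank}[S(t)B(t)]=\bar m$ for all $t\ge0$, then forward invariance of $S(t)y(t)\equiv0$ for $t\ge t_0$ corresponds to the system experiencing the equivalent control $u_{eq}(t)=K(t)y(t)-\Delta(y(t),t)$ for all $t\ge t_0$. Moreover, if $S$ is $T$-periodic, then the columns of $X_0$ form a basis of an invariant subspace of $\mathcal M_{A^{cl}}$ of codimension $\bar m$.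
   Context: Equivalent control: the control obtained from requiring $\frac{d}{dt}(S(t)y(t))\equiv0$ along motions satisfying $S(t)y(t)=0$. *)

theory Defs
  imports "HOL-Analysis.Analysis"
begin

definition state_transition ::
  "(real \<Rightarrow> real^'n^'n) \<Rightarrow> (real \<Rightarrow> real \<Rightarrow> real^'n^'n) \<Rightarrow> bool" where
  "state_transition Acl Psi \<longleftrightarrow>
     (\<forall>t0\<ge>0. Psi t0 t0 = mat 1 \<and>
        (\<forall>t\<ge>0. ((\<lambda>s. Psi s t0) has_vector_derivative (Acl t ** Psi t t0)) (at t within {0..})))"

definition exp_stable_origin :: "(real \<Rightarrow> real^'n^'n) \<Rightarrow> bool" where
  "exp_stable_origin Acl \<longleftrightarrow>
     (\<exists>k lam. k > 0 \<and> lam > 0 \<and>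
       (\<forall>t0 \<ge> 0. \<forall>chi :: real \<Rightarrow> real^'n.
          (\<forall>t\<ge>t0. (chi has_vector_derivative (Acl t *v chi t)) (at t within {t0..})) \<longrightarrow>
          (\<forall>t\<ge>t0. norm (chi t) \<le> k * exp (- lam * (t - t0)) * norm (chi t0))))"

definition periodic_on_nonneg :: "real \<Rightarrow> (real \<Rightarrow> 'a) \<Rightarrow> bool" where
  "periodic_on_nonneg T f \<longleftrightarrow> (\<forall>t\<ge>0. f (t + T) = f t)"

end

theory Submission
  imports Defs
begin

text \<open>
  Exponential stability makes solutions of the closed loop \<open>y' = A\<^sub>c\<^sub>l(t) y\<close> unique (the
  difference of two solutions is a solution starting at 0), hence \<open>\<Psi>(t,0)\<close> is invertible.
  Since \<open>S(t) \<Psi>(t,0) X\<^sub>0 = 0\<close>, \<open>rank X\<^sub>0 = n - m\<close> and \<open>rank S(t) = m\<close>, rank-nullity gives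
  \<open>ker S(t) = range (\<Psi>(t,0) X\<^sub>0)\<close>. Differentiating \<open>S(t) \<Psi>(t,0) X\<^sub>0 p = 0\<close> yields
  \<open>S'(t) x + S(t) A\<^sub>c\<^sub>l(t) x = 0\<close> on \<open>ker S(t)\<close>. Along a motion with \<open>S y \<equiv> 0\<close> we also have
  \<open>S' y + S (A y + B v) = 0\<close>, so \<open>S B (v - K y) = 0\<close> and \<open>v = K y\<close> because \<open>S B\<close> is invertible.
  Conversely, if \<open>v = K y\<close> then \<open>y\<close> is the closed-loop solution \<open>\<Psi>(t,0) X\<^sub>0 p\<close> through
  \<open>y(t\<^sub>0) \<in> ker S(t\<^sub>0)\<close>, so \<open>S y \<equiv> 0\<close>. If \<open>S\<close> is \<open>T\<close>-periodic, \<open>\<Psi>(T,0) X\<^sub>0 p \<in> ker S(T) =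
  ker S(0) = range X\<^sub>0\<close>.
\<close>

lemma bounded_bilinear_matrix_vector_mult:
  "bounded_bilinear (\<lambda>(M::real^'n^'m) (x::real^'n). M *v x)"
  unfolding bilinear_conv_bounded_bilinear[symmetric] bilinear_def
  by (auto intro!: linearI simp: matrix_vector_right_distrib matrix_vector_mult_add_rdistrib
      matrix_vector_mult_scaleR scaleR_matrix_vector_assoc)

lemma at_within_atLeast_nontrivial:
  assumes "a \<le> (t::real)"
  shows "at t within {a..} \<noteq> bot"
proof
  assume "at t within {a..} = bot"
  moreover have "at_right t \<le> at t within {a..}"
    unfolding at_within_Ici_at_right[symmetric] using assms by (intro at_le) auto
  ultimately show False
    using trivial_limit_at_right_real by (metis bot_unique)
qed

lemma has_vector_derivative_matrix_vector_mult:
  fixes M :: "real \<Rightarrow> real^'n^'m" and x :: "real \<Rightarrow> real^'n"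
  assumes "(M has_vector_derivative M') (at t within D)"
    and "(x has_vector_derivative x') (at t within D)"
  shows "((\<lambda>s. M s *v x s) has_vector_derivative (M t *v x' + M' *v x t)) (at t within D)"
  using bounded_bilinear.has_vector_derivative[OF bounded_bilinear_matrix_vector_mult assms]
  by simp

lemma has_vector_derivative_vanishing_matrix_vector_mult:
  fixes M :: "real \<Rightarrow> real^'n^'m" and x :: "real \<Rightarrow> real^'n"
  assumes "(M has_vector_derivative M') (at t within {a..})"
    and "(x has_vector_derivative x') (at t within {a..})"
    and "a \<le> t" and vanish: "\<And>s. s \<ge> a \<Longrightarrow> M s *v x s = 0"
  shows "M t *v x' + M' *v x t = 0"
proof -
  have "((\<lambda>s. 0) has_vector_derivative (M t *v x' + M' *v x t)) (at t within {a..})"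
    by (rule has_vector_derivative_transform[OF _ _ has_vector_derivative_matrix_vector_mult[OF assms(1,2)]])
       (use assms(3) vanish in auto)
  then show ?thesis
    using vector_derivative_unique_within at_within_atLeast_nontrivial[OF assms(3)]
      has_vector_derivative_const by blast
qed

lemma exp_stable_origin_solution_unique:
  fixes Acl :: "real \<Rightarrow> real^'n^'n"
  assumes stable: "exp_stable_origin Acl" and "t0 \<ge> 0"
    and y: "\<And>t. t \<ge> t0 \<Longrightarrow> (y has_vector_derivative (Acl t *v y t)) (at t within {t0..})"
    and z: "\<And>t. t \<ge> t0 \<Longrightarrow> (z has_vector_derivative (Acl t *v z t)) (at t within {t0..})"
    and "y t0 = z t0" and "t \<ge> t0"
  shows "y t = z t"
proof -
  obtain k lam where decay: "\<forall>t0\<ge>0. \<forall>w :: real \<Rightarrow> real^'n.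
      (\<forall>t\<ge>t0. (w has_vector_derivative (Acl t *v w t)) (at t within {t0..})) \<longrightarrow>
      (\<forall>t\<ge>t0. norm (w t) \<le> k * exp (- lam * (t - t0)) * norm (w t0))"
    using stable unfolding exp_stable_origin_def by blast
  have "((\<lambda>s. y s - z s) has_vector_derivative (Acl s *v (y s - z s))) (at s within {t0..})"
    if "s \<ge> t0" for s
    using has_vector_derivative_diff[OF y z, OF that that]
    by (simp add: matrix_vector_mult_diff_distrib)
  then have "norm (y t - z t) \<le> k * exp (- lam * (t - t0)) * norm (y t0 - z t0)"
    using decay assms by blast
  then show ?thesis
    using \<open>y t0 = z t0\<close> by simp
qed

lemma state_transition_has_vector_derivative:
  fixes Acl :: "real \<Rightarrow> real^'n^'n"
  assumes "state_transition Acl Psi" and "t0 \<ge> 0" and "s \<ge> 0"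
  shows "((\<lambda>s. Psi s t0 *v v) has_vector_derivative (Acl s *v (Psi s t0 *v v))) (at s within {0..})"
proof -
  have "((\<lambda>s. Psi s t0) has_vector_derivative (Acl s ** Psi s t0)) (at s within {0..})"
    using assms unfolding state_transition_def by blast
  from has_vector_derivative_matrix_vector_mult[OF this has_vector_derivative_const[of v]]
  show ?thesis
    by (simp add: matrix_vector_mul_assoc)
qed

lemma state_transition_invertible:
  fixes Acl :: "real \<Rightarrow> real^'n^'n"
  assumes Psi: "state_transition Acl Psi" and stable: "exp_stable_origin Acl" and "t \<ge> 0"
  shows "invertible (Psi t 0)"
proof -
  have Psi_diag: "Psi s s = mat 1" if "s \<ge> 0" for s
    using Psi that unfolding state_transition_def by blast
  have "Psi t 0 *v (Psi 0 t *v v) = Psi t t *v v" for v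
    by (rule exp_stable_origin_solution_unique[OF stable order_refl])
       (use state_transition_has_vector_derivative[OF Psi] Psi_diag \<open>t \<ge> 0\<close> in auto)
  then have "Psi t 0 ** Psi 0 t = mat 1"
    using Psi_diag[OF \<open>t \<ge> 0\<close>] by (simp add: matrix_eq matrix_vector_mul_assoc[symmetric])
  then show ?thesis
    using invertible_right_inverse by blast
qed

lemma dim_null_space_add_rank:
  fixes S :: "real^'n^'m"
  shows "dim {x. S *v x = 0} + rank S = CARD('n)"
proof -
  have null: "{x. S *v x = 0} = {x \<in> UNIV. \<forall>z\<in>span (rows S). orthogonal z x}"
  proof (intro set_eqI iffI)
    fix x assume "x \<in> {x. S *v x = 0}"
    then show "x \<in> {x \<in> UNIV. \<forall>z\<in>span (rows S). orthogonal z x}"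
      using orthogonal_nullspace_rowspace orthogonal_commute by blast
  next
    fix x assume "x \<in> {x \<in> UNIV. \<forall>z\<in>span (rows S). orthogonal z x}"
    then have "orthogonal (row i S) x" for i
      by (auto simp: rows_def intro: span_base)
    then show "x \<in> {x. S *v x = 0}"
      by (auto simp: vec_eq_iff matrix_vector_mul_component orthogonal_def row_def)
  qed
  show ?thesis
    using dim_subspace_orthogonal_to_vectors[of "span (rows S)" UNIV]
    by (simp add: null row_rank_def)
qed

lemma null_space_eq_range:
  fixes S :: "real^'n^'m" and N :: "real^'k^'n"
  assumes "S ** N = 0" and "rank N + rank S = CARD('n)"
  shows "{x. S *v x = 0} = range ((*v) N)"
proof (rule subspace_dim_equal[symmetric])
  show "range ((*v) N) \<subseteq> {x. S *v x = 0}"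
    using assms(1) by (auto simp: matrix_vector_mul_assoc)
  show "dim {x. S *v x = 0} \<le> dim (range ((*v) N))"
    using dim_null_space_add_rank[of S] assms(2) by (simp add: rank_dim_range)
  show "subspace (range ((*v) N))"
    by (rule linear_subspace_image[OF matrix_vector_mul_linear subspace_UNIV])
  show "subspace {x. S *v x = 0}"
    by (rule linear_subspace_kernel[OF matrix_vector_mul_linear])
qed

lemma rank_invertible_mult_left:
  fixes P :: "real^'n^'n" and X :: "real^'k^'n"
  assumes "invertible P"
  shows "rank (P ** X) = rank X"
proof (rule antisym)
  obtain Q where "Q ** P = mat 1"
    using assms unfolding invertible_def by blast
  then have "rank X = rank (Q ** (P ** X))"
    by (simp add: matrix_mul_assoc)
  then show "rank X \<le> rank (P ** X)"
    using rank_mul_le_right by metis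
qed (rule rank_mul_le_right)

lemma span_columns_eq_range:
  fixes X :: "real^'k^'n"
  shows "span (columns X) = range ((*v) X)"
proof
  show "span (columns X) \<subseteq> range ((*v) X)"
  proof (rule span_minimal)
    show "columns X \<subseteq> range ((*v) X)"
      by (auto simp: columns_image_basis)
    show "subspace (range ((*v) X))"
      by (rule linear_subspace_image[OF matrix_vector_mul_linear subspace_UNIV])
  qed
  show "range ((*v) X) \<subseteq> span (columns X)"
    using matrix_vector_mult_in_columnspace by blast
qed

lemma
  fixes X :: "real^'k^'n"
  assumes "rank X = CARD('k)"
  shows full_rank_card_columns: "card (columns X) = CARD('k)"
    and full_rank_independent_columns: "independent (columns X)"
proof -
  have columns: "columns X = range (\<lambda>i. column i X)"
    by (auto simp: columns_def)
  have "dim (columns X) = CARD('k)"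
    using assms by (simp add: column_rank_def)
  moreover have "dim (columns X) \<le> card (columns X)"
    using columns by (intro dim_le_card span_superset) auto
  moreover have "card (columns X) \<le> CARD('k)"
    using columns card_image_le[of UNIV "\<lambda>i. column i X"] by simp
  ultimately show card: "card (columns X) = CARD('k)"
    by simp
  show "independent (columns X)"
    using card_eq_dim[of "columns X" "columns X"] card \<open>dim (columns X) = CARD('k)\<close> columns
    by (simp add: span_superset)
qed

locale sliding_surface =
  fixes A :: "real \<Rightarrow> real^'n^'n" and B :: "real \<Rightarrow> real^'m^'n" and K :: "real \<Rightarrow> real^'n^'m"
    and Psi :: "real \<Rightarrow> real \<Rightarrow> real^'n^'n" and X0 :: "real^'k^'n"
    and S :: "real \<Rightarrow> real^'n^'m" and S' :: "real \<Rightarrow> real^'n^'m"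
  assumes dims: "CARD('k) + CARD('m) = CARD('n)"
    and stable: "exp_stable_origin (\<lambda>t. A t + B t ** K t)"
    and Psi: "state_transition (\<lambda>t. A t + B t ** K t) Psi"
    and X0_rank: "rank X0 = CARD('k)"
    and S_deriv: "\<And>t. t \<ge> 0 \<Longrightarrow> (S has_vector_derivative S' t) (at t within {0..})"
    and S_Psi_X0: "\<And>t p. t \<ge> 0 \<Longrightarrow> S t *v (Psi t 0 *v (X0 *v p)) = 0"
    and SB_rank: "\<And>t. t \<ge> 0 \<Longrightarrow> rank (S t ** B t) = CARD('m)"
begin

definition Acl :: "real \<Rightarrow> real^'n^'n" where
  "Acl t = A t + B t ** K t"

lemma Acl_apply: "Acl t *v x = A t *v x + B t *v (K t *v x)"
  by (simp add: Acl_def matrix_vector_mult_add_rdistrib matrix_vector_mul_assoc)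

lemma Psi_X0_solution:
  assumes "0 \<le> t0" and "t0 \<le> t"
  shows "((\<lambda>s. Psi s 0 *v (X0 *v p)) has_vector_derivative (Acl t *v (Psi t 0 *v (X0 *v p))))
           (at t within {t0..})"
  by (rule has_vector_derivative_within_subset
      [OF state_transition_has_vector_derivative[OF Psi[folded Acl_def] order_refl]])
     (use assms in auto)

lemma null_space_S_eq_range:
  assumes "t \<ge> 0"
  shows "{x. S t *v x = 0} = range (\<lambda>p. Psi t 0 *v (X0 *v p))"
proof -
  have "rank (S t) = CARD('m)"
    using rank_mul_le_left[of "S t" "B t"] rank_bound[of "S t"] SB_rank[OF assms] by simp
  moreover have "rank (Psi t 0 ** X0) = CARD('k)"
    using rank_invertible_mult_left[OF state_transition_invertible[OF Psi stable assms], of X0]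
      X0_rank by simp
  moreover have "S t ** (Psi t 0 ** X0) = 0"
    using S_Psi_X0[OF assms] by (simp add: matrix_eq matrix_vector_mul_assoc[symmetric])
  ultimately show ?thesis
    using null_space_eq_range[of "S t" "Psi t 0 ** X0"] dims
    by (simp add: matrix_vector_mul_assoc[symmetric])
qed

lemma S_derivative_on_null_space:
  assumes "t \<ge> 0" and "S t *v x = 0"
  shows "S t *v (Acl t *v x) + S' t *v x = 0"
proof -
  obtain p where "x = Psi t 0 *v (X0 *v p)"
    using null_space_S_eq_range[OF \<open>t \<ge> 0\<close>] assms(2) by blast
  then show ?thesis
    using has_vector_derivative_vanishing_matrix_vector_mult[OF S_deriv Psi_X0_solution]
      S_Psi_X0 \<open>t \<ge> 0\<close> by blast
qed

lemma sliding_forces_closed_loop_input: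
  assumes "t0 \<ge> 0"
    and y: "\<And>t. t \<ge> t0 \<Longrightarrow>
              (y has_vector_derivative (A t *v y t + B t *v v t)) (at t within {t0..})"
    and sliding: "\<And>t. t \<ge> t0 \<Longrightarrow> S t *v y t = 0"
    and "t \<ge> t0"
  shows "v t = K t *v y t"
proof -
  have "t \<ge> 0"
    using assms by simp
  have "(S has_vector_derivative S' t) (at t within {t0..})"
    by (rule has_vector_derivative_within_subset[OF S_deriv[OF \<open>t \<ge> 0\<close>]]) (use \<open>t0 \<ge> 0\<close> in auto)
  from has_vector_derivative_vanishing_matrix_vector_mult[OF this y[OF \<open>t \<ge> t0\<close>] \<open>t \<ge> t0\<close> sliding]
  have "S t *v (A t *v y t + B t *v v t) + S' t *v y t = 0" .
  moreover have "S t *v (Acl t *v y t) + S' t *v y t = 0"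
    using S_derivative_on_null_space \<open>t \<ge> 0\<close> sliding[OF \<open>t \<ge> t0\<close>] by blast
  ultimately have "S t *v (B t *v v t) = S t *v (B t *v (K t *v y t))"
    by (simp add: Acl_apply matrix_vector_right_distrib) (metis add_right_cancel add_left_cancel)
  then have "(S t ** B t) *v (v t - K t *v y t) = 0"
    by (simp add: matrix_vector_mult_diff_distrib matrix_vector_mul_assoc[symmetric])
  moreover have "inj ((*v) (S t ** B t))"
    using SB_rank[OF \<open>t \<ge> 0\<close>] full_rank_injective by blast
  ultimately show ?thesis
    by (metis injD matrix_vector_mult_0_right eq_iff_diff_eq_0)
qed

lemma closed_loop_input_keeps_sliding:
  assumes "t0 \<ge> 0"
    and y: "\<And>t. t \<ge> t0 \<Longrightarrow>
              (y has_vector_derivative (A t *v y t + B t *v v t)) (at t within {t0..})"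
    and closed_loop: "\<And>t. t \<ge> t0 \<Longrightarrow> v t = K t *v y t"
    and "S t0 *v y t0 = 0" and "t \<ge> t0"
  shows "S t *v y t = 0"
proof -
  obtain p where p: "y t0 = Psi t0 0 *v (X0 *v p)"
    using null_space_S_eq_range[OF \<open>t0 \<ge> 0\<close>] \<open>S t0 *v y t0 = 0\<close> by blast
  have "y t = Psi t 0 *v (X0 *v p)"
  proof (rule exp_stable_origin_solution_unique[where z="\<lambda>s. Psi s 0 *v (X0 *v p)",
        OF stable[folded Acl_def] \<open>t0 \<ge> 0\<close>])
    show "(y has_vector_derivative (Acl s *v y s)) (at s within {t0..})" if "s \<ge> t0" for s
      using y[OF that] closed_loop[OF that] by (simp add: Acl_apply)
    show "((\<lambda>s. Psi s 0 *v (X0 *v p)) has_vector_derivative (Acl s *v (Psi s 0 *v (X0 *v p))))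
            (at s within {t0..})" if "s \<ge> t0" for s
      using Psi_X0_solution \<open>t0 \<ge> 0\<close> that by blast
  qed (use p \<open>t \<ge> t0\<close> in auto)
  then show ?thesis
    using S_Psi_X0 assms by simp
qed

lemma monodromy_invariant_range_X0:
  assumes "T \<ge> 0" and "S T = S 0"
  shows "Psi T 0 *v (X0 *v p) \<in> range ((*v) X0)"
proof -
  have "S 0 *v (Psi T 0 *v (X0 *v p)) = 0"
    using S_Psi_X0 assms by metis
  moreover have "Psi 0 0 = mat 1"
    using Psi unfolding state_transition_def by simp
  ultimately show ?thesis
    using null_space_S_eq_range[of 0] by auto
qed

lemma sliding_iff_closed_loop_input:
  assumes "t0 \<ge> 0"
    and "\<And>t. t \<ge> t0 \<Longrightarrow>
           (y has_vector_derivative (A t *v y t + B t *v v t)) (at t within {t0..})"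
    and "S t0 *v y t0 = 0"
  shows "(\<forall>t\<ge>t0. S t *v y t = 0) \<longleftrightarrow> (\<forall>t\<ge>t0. v t = K t *v y t)"
  using sliding_forces_closed_loop_input[OF assms(1,2)]
    closed_loop_input_keeps_sliding[OF assms(1,2) _ assms(3)] by blast

end

theorem lemma3:
  fixes A :: "real \<Rightarrow> real^'n^'n" and B :: "real \<Rightarrow> real^'m^'n"
    and K :: "real \<Rightarrow> real^'n^'m" and \<Delta> :: "real^'n \<Rightarrow> real \<Rightarrow> real^'m"
    and Psi :: "real \<Rightarrow> real \<Rightarrow> real^'n^'n"
    and X0 :: "real^'k^'n" and S :: "real \<Rightarrow> real^'n^'m"
    and T :: real
  assumes dims: "CARD('k) + CARD('m) = CARD('n)"
    and T_pos: "T > 0"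
    and A_cont: "continuous_on {0..} A" and B_cont: "continuous_on {0..} B"
    and A_bdd: "bounded (A ` {0..})" and B_bdd: "bounded (B ` {0..})"
    and A_per: "periodic_on_nonneg T A" and B_per: "periodic_on_nonneg T B"
    and T_min: "\<forall>T'. 0 < T' \<and> T' < T \<longrightarrow> \<not> (periodic_on_nonneg T' A \<and> periodic_on_nonneg T' B)"
    and Delta_bdd: "bounded (range (\<lambda>(y, t). \<Delta> y t))"
    and K_cont: "continuous_on {0..} K" and K_per: "periodic_on_nonneg T K"
    and stable: "exp_stable_origin (\<lambda>t. A t + B t ** K t)"
    and Psi: "state_transition (\<lambda>t. A t + B t ** K t) Psi"
    and X0_rank: "rank X0 = CARD('k)"
    and S_C1: "\<exists>S'. (\<forall>t\<ge>0. (S has_vector_derivative S' t) (at t within {0..}))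
                     \<and> continuous_on {0..} S'"
    and S_ker: "\<forall>t\<ge>0. \<forall>p. S t *v (Psi t 0 *v (X0 *v p)) = 0"
    and SB_rank: "\<forall>t\<ge>0. rank (S t ** B t) = CARD('m)"
  shows
    "(\<forall>(y :: real \<Rightarrow> real^'n) (u :: real \<Rightarrow> real^'m) t0.
        t0 \<ge> 0 \<longrightarrow>
        (\<forall>t\<ge>t0. (y has_vector_derivative (A t *v y t + B t *v (u t + \<Delta> (y t) t)))
                    (at t within {t0..})) \<longrightarrow>
        S t0 *v y t0 = 0 \<longrightarrow>
        ((\<forall>t\<ge>t0. S t *v y t = 0) \<longleftrightarrow> (\<forall>t\<ge>t0. u t = K t *v y t - \<Delta> (y t) t)))
     \<and> (periodic_on_nonneg T S \<longrightarrow>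
        (let M = Psi T 0; V = span {column i X0 | i. True} in
           independent {column i X0 | i. True} \<and> card {column i X0 | i. True} = CARD('k)
           \<and> (\<forall>v\<in>V. M *v v \<in> V) \<and> dim V = CARD('n) - CARD('m)))"
proof -
  obtain S' where S': "\<forall>t\<ge>0. (S has_vector_derivative S' t) (at t within {0..})"
    using S_C1 by blast
  interpret sliding_surface A B K Psi X0 S S'
    using dims stable Psi X0_rank S' S_ker SB_rank by unfold_locales auto
  have equivalent_control: "(\<forall>t\<ge>t0. S t *v y t = 0) \<longleftrightarrow> (\<forall>t\<ge>t0. u t = K t *v y t - \<Delta> (y t) t)"
    if "t0 \<ge> 0"
      and "\<forall>t\<ge>t0. (y has_vector_derivative (A t *v y t + B t *v (u t + \<Delta> (y t) t)))
                    (at t within {t0..})"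
      and "S t0 *v y t0 = 0"
    for y :: "real \<Rightarrow> real^'n" and u :: "real \<Rightarrow> real^'m" and t0
    using sliding_iff_closed_loop_input[of t0 y "\<lambda>t. u t + \<Delta> (y t) t"] that
    by (simp add: eq_diff_eq)
  have columns_X0: "{column i X0 | i. True} = columns X0"
    by (simp add: columns_def)
  have "\<forall>v\<in>span (columns X0). Psi T 0 *v v \<in> span (columns X0)"
    if "periodic_on_nonneg T S"
  proof -
    have "S T = S 0"
      using that unfolding periodic_on_nonneg_def by (metis add_0 order_refl)
    then show ?thesis
      using monodromy_invariant_range_X0 T_pos by (auto simp: span_columns_eq_range)
  qed
  then show ?thesis
    unfolding columns_X0
    using equivalent_control full_rank_independent_columns[OF X0_rank]
      full_rank_card_columns[OF X0_rank] X0_rank dims[symmetric]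
    by (simp add: Let_def dim_span column_rank_def)
qed

end
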